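(* Let $\mathcal{X}^{U}=\mathcal{X}^{+,U}\cup\mathcal{X}^{-,U}$ and let $\mathcal{V}$ be the Vervaat transform on $\mathcal{X}^U$. Then $\mathcal{V}:\mathcal{X}^U\to\mathcal{X}^U$ is a bijection with $\theta(\mathcal{V}(x))=\theta(x)$ and $H(\mathcal{V}(x))=-H(x)$; it maps $\mathcal{X}^{+,U}$ into $\mathcal{X}^{-,U}$ and $\mathcal{X}^{-,U}$ into $\mathcal{X}^{+,U}$; its level numbers satisfy $$N_{-h}(\mathcal{V}(x))=N_{H(x)-1-h}(x)\quad\text{for }h=0,\dots,H(x)-1,\text{ when }x\in\mathcal{X}^{+,U},$$ $$N_{-h}(\mathcal{V}(x))=N_{H(x)+1-h}(x)\quad\text{for }h=H(x)+1,\dots,0,\text{ when }x\in\mathcal{X}^{-,U};$$ and $\mathcal{V}$ is an involution: $\mathcal{V}\circ\mathcal{V}=\mathrm{Id}_{\mathcal{X}^U}$, so $\mathcal{V}^{-1}=\mathcal{V}$.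
   Context: A positive (resp. negative) excursion is a finite integer sequence $x=(x_n:0\le n\le\theta)$ with $x_0=x_\theta=0$, $x_n>0$ (resp. $x_n<0$) for $0<n<\theta$, and jumps $y_n=x_{n+1}-x_n\in\{1,-1\}$; $\theta=\theta(x)$ is its length. The height is $H(x)=\max_n x_n$ for positive and $H(x)=\min_n x_n$ for negative excursions. Level numbers: for positive $x$, $N_h(x)=|\{n\in[0,\theta):y_n=1,x_n=h\}|$ for $h\ge0$; for negative $x$, $N_h(x)=|\{n\in[0,\theta):y_n=-1,x_n=h\}|$ for $h\le0$. $\mathcal{X}^{+,U}$ is the set of positive excursions with $N_{H(x)-1}(x)=1$ and $\mathcal{X}^{-,U}$ the set of negative excursions with $N_{H(x)+1}(x)=1$; equivalently, excursions whose height is attained at a unique time $m\in(0,\theta)$. Vervaat transform: for $x\in\mathcal{X}^U$ with length $\theta$ and unique $m$ such that $x_m=H(x)$, $\mathcal{V}(x)=\hat x$ where $\hat x_n=x_{n+m}-H(x)$ for $0\le n\le\theta-m$ and $\hat x_n=x_{n+m-\theta}-H(x)$ for $\theta-m+1\le n\le\theta$. *)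

theory Defs
  imports Main
begin

text \<open>An integer sequence (x_n : 0 \<le> n \<le> \<theta>) is represented as a nonempty
  list of length \<theta>+1; x_n is x ! n.\<close>

definition theta :: "int list \<Rightarrow> nat" where
  "theta x = length x - 1"

definition unit_jumps :: "int list \<Rightarrow> bool" where
  "unit_jumps x \<longleftrightarrow> (\<forall>n < theta x. x ! (n+1) - x ! n \<in> {1, -1})"

definition pos_exc :: "int list \<Rightarrow> bool" where
  "pos_exc x \<longleftrightarrow> x \<noteq> [] \<and> x ! 0 = 0 \<and> x ! theta x = 0 \<and>
     (\<forall>n. 0 < n \<and> n < theta x \<longrightarrow> x ! n > 0) \<and> unit_jumps x"

definition neg_exc :: "int list \<Rightarrow> bool" where
  "neg_exc x \<longleftrightarrow> x \<noteq> [] \<and> x ! 0 = 0 \<and> x ! theta x = 0 \<and>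
     (\<forall>n. 0 < n \<and> n < theta x \<longrightarrow> x ! n < 0) \<and> unit_jumps x"

definition height :: "int list \<Rightarrow> int" where
  "height x = (if pos_exc x then Max (set x) else Min (set x))"

definition N :: "int \<Rightarrow> int list \<Rightarrow> nat" where
  "N h x = (if pos_exc x
      then card {n. n < theta x \<and> x ! (n+1) - x ! n = 1 \<and> x ! n = h}
      else card {n. n < theta x \<and> x ! (n+1) - x ! n = -1 \<and> x ! n = h})"

definition XpU :: "int list set" where
  "XpU = {x. pos_exc x \<and> N (height x - 1) x = 1}"

definition XmU :: "int list set" where
  "XmU = {x. neg_exc x \<and> N (height x + 1) x = 1}"

definition XU :: "int list set" where
  "XU = XpU \<union> XmU"

definition argH :: "int list \<Rightarrow> nat" where
  "argH x = (THE m. 0 < m \<and> m < theta x \<and> x ! m = height x)"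

definition vervaat :: "int list \<Rightarrow> int list" where
  "vervaat x = (let m = argH x; t = theta x; H = height x in
     map (\<lambda>n. if n \<le> t - m then x ! (n + m) - H else x ! (n + m - t) - H) [0..<t+1])"

end

theory Submission
  imports Defs
begin

text \<open>Cutting x at the unique time m of its extremum and swapping the two pieces is the same
  as reading the closed walk x cyclically from time m, shifted by -H(x). For a positive x the
  uniqueness of the maximum makes the rotated walk strictly negative inside; its minimum -H(x)
  sits at time theta - m, where x was at 0, and x leaves 0 upwards only once, so V(x) lies in
  X^{-,U}, and rotating once more by theta - m gives back x. Step counts are invariant under
  cyclic rotation, and in a closed +-1 walk the down-steps from level k + 1 are as many as the
  up-steps from level k, which turns the down-crossings of V(x) into the level numbers of x.
  The negative case reduces to the positive one by the reflection x \<mapsto> -x.\<close>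

lemma card_up_steps_eq_card_down_steps:
  fixes f :: "nat \<Rightarrow> int"
  assumes steps: "\<forall>n<t. f (Suc n) - f n \<in> {1, -1}" and closed: "f t = f 0"
  shows "card {j. j < t \<and> f (Suc j) - f j = 1 \<and> f j = k}
       = card {j. j < t \<and> f (Suc j) - f j = -1 \<and> f j = k + 1}"
proof -
  let ?up = "\<lambda>j. f (Suc j) - f j = 1 \<and> f j = k"
  let ?down = "\<lambda>j. f (Suc j) - f j = -1 \<and> f j = k + 1"
  \<comment> \<open>an up-step from k raises, a down-step from k + 1 lowers, and every other step keeps
    the indicator of being above k, so the difference of the counts telescopes\<close>
  let ?above = "\<lambda>j. of_bool (f j > k) :: int"
  have "int (card {j. j < t \<and> ?up j}) - int (card {j. j < t \<and> ?down j})
      = (\<Sum>j<t. of_bool (?up j) - of_bool (?down j))"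
    by (simp add: sum_subtractf Int_def)
  also have "\<dots> = (\<Sum>j<t. ?above (Suc j) - ?above j)"
  proof (rule sum.cong)
    fix j assume "j \<in> {..<t}"
    then have "f (Suc j) = f j + 1 \<or> f (Suc j) = f j - 1" using steps by auto
    then show "of_bool (?up j) - of_bool (?down j) = ?above (Suc j) - ?above j" by auto
  qed simp
  also have "\<dots> = 0" using closed sum_lessThan_telescope[of ?above t] by simp
  finally show ?thesis by simp
qed

lemma bij_betw_rotate:
  fixes t :: nat
  assumes "0 < t"
  shows "bij_betw (\<lambda>n. (n + m) mod t) {..<t} {..<t}"
proof (rule bij_betw_byWitness[where f' = "\<lambda>n. (n + (t - m mod t)) mod t"])
  have unshift: "(n + m + (t - m mod t)) mod t = n mod t" for n
  proof -
    have "n + m + (t - m mod t) = n + t + (m - m mod t)"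
      using mod_less_divisor[OF assms, of m] mod_less_eq_dividend[of m t] by linarith
    also have "\<dots> = n + (1 + m div t) * t"
      by (simp add: minus_mod_eq_div_mult)
    finally show ?thesis by (metis mod_mult_self1)
  qed
  show "\<forall>n\<in>{..<t}. ((n + m) mod t + (t - m mod t)) mod t = n"
    by (metis unshift lessThan_iff mod_add_left_eq mod_less)
  show "\<forall>n\<in>{..<t}. ((n + (t - m mod t)) mod t + m) mod t = n"
    by (metis unshift add.commute add.left_commute lessThan_iff mod_add_left_eq mod_less)
qed (use assms in auto)

lemma card_rotate:
  fixes t :: nat
  assumes "0 < t"
  shows "card {n. n < t \<and> P ((n + m) mod t)} = card {j. j < t \<and> P j}"
proof -
  have "bij_betw (\<lambda>n. (n + m) mod t) {n \<in> {..<t}. P ((n + m) mod t)} {j \<in> {..<t}. P j}"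
    by (rule bij_betw_Collect[OF bij_betw_rotate[OF assms]]) simp
  then show ?thesis by (simp add: bij_betw_same_card)
qed

lemma rotate_eq_iff:
  fixes t :: nat
  assumes "0 < t" "a < t" "b < t"
  shows "(a + m) mod t = (b + m) mod t \<longleftrightarrow> a = b"
  using bij_betw_imp_inj_on[OF bij_betw_rotate[OF assms(1)]] assms(2,3) by (auto dest: inj_onD)

lemma rotate_rotate:
  fixes t :: nat
  assumes "m \<le> t"
  shows "((n + (t - m)) mod t + m) mod t = n mod t"
  using assms by (simp add: mod_add_left_eq)

lemma rotate_Suc_closed:
  fixes t :: nat
  assumes "0 < t" "f t = f 0"
  shows "f ((Suc n + m) mod t) = f (Suc ((n + m) mod t))"
  using assms by (simp add: mod_Suc)

lemma card_steps_rotate: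
  fixes t :: nat
  assumes "0 < t" "f t = f 0" and g: "\<And>n. n \<le> t \<Longrightarrow> g n = f ((n + m) mod t)"
  shows "card {n. n < t \<and> P (g n) (g (Suc n))} = card {j. j < t \<and> P (f j) (f (Suc j))}"
proof -
  have "g n = f ((n + m) mod t) \<and> g (Suc n) = f (Suc ((n + m) mod t))" if "n < t" for n
    using g[of n] g[of "Suc n"] rotate_Suc_closed[OF assms(1,2)] that by simp
  then have "{n. n < t \<and> P (g n) (g (Suc n))}
      = {n. n < t \<and> (\<lambda>j. P (f j) (f (Suc j))) ((n + m) mod t)}"
    by auto
  then show ?thesis using card_rotate[OF assms(1), of "\<lambda>j. P (f j) (f (Suc j))" m] by simp
qed

lemma length_vervaat: "length (vervaat x) = Suc (theta x)"
  by (simp add: vervaat_def Let_def)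

lemma theta_vervaat: "theta (vervaat x) = theta x"
  by (simp add: length_vervaat theta_def)

lemma nth_vervaat:
  assumes "argH x < theta x" "x ! theta x = x ! 0" "n \<le> theta x"
  shows "vervaat x ! n = x ! ((n + argH x) mod theta x) - height x"
proof -
  define m t where "m = argH x" and "t = theta x"
  have "vervaat x ! n = (if n \<le> t - m then x ! (n + m) else x ! (n + m - t)) - height x"
    using assms(3) by (simp add: vervaat_def Let_def m_def t_def del: upt_Suc)
  also have "(if n \<le> t - m then x ! (n + m) else x ! (n + m - t)) = x ! ((n + m) mod t)"
  proof -
    consider "n + m < t" | "n + m = t" | "t < n + m" by linarith
    then show ?thesis
    proof cases
      case 3
      then have "(n + m) mod t = n + m - t"
        using assms(1,3) by (simp add: le_mod_geq m_def t_def)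
      then show ?thesis using 3 assms(1) by (auto simp: m_def t_def)
    qed (use assms(2) t_def in auto)
  qed
  finally show ?thesis by (simp add: m_def t_def)
qed

lemma pos_exc_length: "pos_exc x \<Longrightarrow> length x = Suc (theta x)"
  by (simp add: pos_exc_def theta_def)

lemma pos_exc_steps: "pos_exc x \<Longrightarrow> n < theta x \<Longrightarrow> x ! Suc n - x ! n \<in> {1, -1}"
  by (simp add: pos_exc_def unit_jumps_def)

lemma pos_exc_nth_bounds:
  assumes "pos_exc x" "j \<le> theta x"
  shows "0 \<le> x ! j" "x ! j \<le> height x"
proof -
  show "0 \<le> x ! j"
    using assms by (cases "0 < j \<and> j < theta x") (auto simp: pos_exc_def le_less)
  have "x ! j \<in> set x" using assms pos_exc_length[OF assms(1)] by simp
  then show "x ! j \<le> height x" using assms(1) by (simp add: height_def)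
qed

lemma neg_exc_not_pos_exc: "neg_exc x \<Longrightarrow> 2 \<le> theta x \<Longrightarrow> \<not> pos_exc x"
  unfolding neg_exc_def pos_exc_def by force

lemma pos_exc_theta_ge_2:
  assumes "pos_exc x" "0 < theta x"
  shows "2 \<le> theta x"
proof (rule ccontr)
  assume "\<not> 2 \<le> theta x"
  then have "theta x = 1" using assms(2) by simp
  then show False using assms(1) pos_exc_steps[OF assms(1), of 0] by (simp add: pos_exc_def)
qed

lemma pos_exc_nth_1:
  assumes "pos_exc x" "0 < theta x"
  shows "x ! 1 = 1"
proof -
  have "1 < theta x" using pos_exc_theta_ge_2[OF assms] by simp
  then have "x ! 1 > 0" using assms(1) by (simp add: pos_exc_def)
  then show ?thesis using assms pos_exc_steps[OF assms(1), of 0] by (auto simp: pos_exc_def)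
qed

lemma N_0_pos_exc:
  assumes "pos_exc x" "0 < theta x"
  shows "N 0 x = 1"
proof -
  have "{j. j < theta x \<and> x ! Suc j - x ! j = 1 \<and> x ! j = 0} = {0}"
    using assms pos_exc_nth_1[OF assms] by (force simp: pos_exc_def)
  then show ?thesis using assms(1) by (simp add: N_def)
qed

lemma XpU_unique_height_time:
  assumes "x \<in> XpU"
  obtains m where "0 < m" "m < theta x" "x ! m = height x"
    "\<And>j. j \<le> theta x \<Longrightarrow> x ! j = height x \<Longrightarrow> j = m"
proof -
  have pos: "pos_exc x" using assms by (simp add: XpU_def)
  define S where "S = {n. n < theta x \<and> x ! (n + 1) - x ! n = 1 \<and> x ! n = height x - 1}"
  have "card S = 1" using pos assms by (simp add: XpU_def N_def S_def)
  then obtain s where S: "S = {s}" by (rule card_1_singletonE)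
  then have s: "s < theta x" by (auto simp: S_def)
  then have "0 < height x"
    using pos_exc_nth_bounds(2)[OF pos, of 1] pos_exc_nth_1[OF pos] by simp
  then have ends: "x ! 0 \<noteq> height x" "x ! theta x \<noteq> height x" using pos by (auto simp: pos_exc_def)
  have unique: "j = Suc s" if jH: "j \<le> theta x" "x ! j = height x" for j
  proof -
    obtain i where i: "j = Suc i" "i < theta x"
      using jH ends by (cases j) (auto simp: le_less)
    have "x ! i = height x - 1"
      using pos_exc_nth_bounds(2)[OF pos, of i] pos_exc_steps[OF pos i(2)] i jH by auto
    then have "i \<in> S" using i jH by (simp add: S_def)
    then show ?thesis using S i by simp
  qed
  have "height x \<in> set x" using pos by (simp add: height_def pos_exc_def)
  then obtain j where j: "j \<le> theta x" "x ! j = height x"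
    using pos_exc_length[OF pos] by (auto simp: in_set_conv_nth less_Suc_eq_le)
  have "j \<noteq> 0" "j \<noteq> theta x" using j(2) ends by metis+
  then have "0 < j" "j < theta x" using j(1) by auto
  moreover have "i = j" if "i \<le> theta x" "x ! i = height x" for i
    using unique[OF that] unique[OF j] by simp
  ultimately show thesis using that j by blast
qed

lemma XpU_argH:
  assumes "x \<in> XpU"
  shows "0 < argH x" "argH x < theta x" "x ! argH x = height x"
    and "\<And>j. j \<le> theta x \<Longrightarrow> x ! j = height x \<Longrightarrow> j = argH x"
proof -
  obtain m where m: "0 < m" "m < theta x" "x ! m = height x"
    and unique: "\<And>j. j \<le> theta x \<Longrightarrow> x ! j = height x \<Longrightarrow> j = m"
    using XpU_unique_height_time[OF assms] by blast
  have "argH x = m" unfolding argH_def using m unique by (intro the_equality) auto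
  then show "0 < argH x" "argH x < theta x" "x ! argH x = height x"
    and "\<And>j. j \<le> theta x \<Longrightarrow> x ! j = height x \<Longrightarrow> j = argH x"
    using m unique by auto
qed

context
  fixes x assumes x: "x \<in> XpU"
begin

lemma XpU_pos_exc: "pos_exc x"
  using x by (simp add: XpU_def)

lemma nth_vervaat_XpU:
  "n \<le> theta x \<Longrightarrow> vervaat x ! n = x ! ((n + argH x) mod theta x) - height x"
  using nth_vervaat[OF XpU_argH(2)[OF x]] XpU_pos_exc by (simp add: pos_exc_def)

lemma neg_exc_vervaat_XpU: "neg_exc (vervaat x)"
proof -
  let ?t = "theta x" and ?m = "argH x"
  have m: "0 < ?m" "?m < ?t" using XpU_argH[OF x] by simp_all
  have ends: "vervaat x ! 0 = 0" "vervaat x ! ?t = 0"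
    using nth_vervaat_XpU[of 0] nth_vervaat_XpU[of ?t] m XpU_argH(3)[OF x] by simp_all
  have below: "vervaat x ! n < 0" if n: "0 < n" "n < ?t" for n
  proof -
    have "(n + ?m) mod ?t \<noteq> ?m" using rotate_eq_iff[of ?t n 0 ?m] n m by simp
    then have "x ! ((n + ?m) mod ?t) \<noteq> height x" using XpU_argH(4)[OF x] m by fastforce
    moreover have "x ! ((n + ?m) mod ?t) \<le> height x"
      using pos_exc_nth_bounds(2)[OF XpU_pos_exc] m by simp
    ultimately show ?thesis using nth_vervaat_XpU[of n] n by simp
  qed
  have steps: "vervaat x ! Suc n - vervaat x ! n \<in> {1, -1}" if n: "n < ?t" for n
  proof -
    have "x ! ?t = x ! 0" using XpU_pos_exc by (simp add: pos_exc_def)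
    then have "vervaat x ! Suc n = x ! Suc ((n + ?m) mod ?t) - height x"
      using nth_vervaat_XpU[of "Suc n"] n rotate_Suc_closed[of ?t "(!) x" n ?m] m by simp
    then show ?thesis
      using nth_vervaat_XpU[of n] n pos_exc_steps[OF XpU_pos_exc, of "(n + ?m) mod ?t"] m by simp
  qed
  show ?thesis
    using ends below steps length_vervaat[of x]
    by (auto simp: neg_exc_def unit_jumps_def theta_vervaat)
qed

lemma XpU_theta_ge_2: "2 \<le> theta x"
  using pos_exc_theta_ge_2[OF XpU_pos_exc] XpU_argH(1,2)[OF x] by simp

lemma not_pos_exc_vervaat_XpU: "\<not> pos_exc (vervaat x)"
  using neg_exc_not_pos_exc[OF neg_exc_vervaat_XpU] XpU_theta_ge_2 by (simp add: theta_vervaat)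

lemma height_vervaat_XpU: "height (vervaat x) = - height x"
proof -
  let ?t = "theta x" and ?m = "argH x"
  have m: "0 < ?m" "?m < ?t" using XpU_argH[OF x] by simp_all
  have "Min (set (vervaat x)) = - height x"
  proof (rule Min_eqI)
    show "- height x \<le> v" if "v \<in> set (vervaat x)" for v
      using that nth_vervaat_XpU pos_exc_nth_bounds(1)[OF XpU_pos_exc, of "(_ + ?m) mod ?t"] m
      by (auto simp: in_set_conv_nth length_vervaat)
    have "vervaat x ! (?t - ?m) = - height x"
      using nth_vervaat_XpU[of "?t - ?m"] m XpU_pos_exc by (simp add: pos_exc_def)
    moreover have "?t - ?m < length (vervaat x)" by (simp add: length_vervaat)
    ultimately show "- height x \<in> set (vervaat x)" by (metis nth_mem)
  qed simp
  then show ?thesis using not_pos_exc_vervaat_XpU by (simp add: height_def)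
qed

lemma N_vervaat_XpU: "N (-h) (vervaat x) = N (height x - 1 - h) x"
proof -
  let ?t = "theta x" and ?H = "height x"
  have t: "0 < ?t" using XpU_theta_ge_2 by simp
  have closed: "x ! ?t = x ! 0" using XpU_pos_exc by (simp add: pos_exc_def)
  have "N (-h) (vervaat x)
      = card {n. n < ?t \<and> vervaat x ! Suc n - vervaat x ! n = -1 \<and> vervaat x ! n = -h}"
    using not_pos_exc_vervaat_XpU by (simp add: N_def theta_vervaat)
  also have "\<dots> = card {j. j < ?t \<and> (x ! Suc j - ?H) - (x ! j - ?H) = -1 \<and> x ! j - ?H = -h}"
    using card_steps_rotate[OF t, of "\<lambda>j. x ! j - ?H" "(!) (vervaat x)" "argH x"
        "\<lambda>a b. b - a = -1 \<and> a = -h"] closed nth_vervaat_XpU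
    by simp
  also have "\<dots> = card {j. j < ?t \<and> x ! Suc j - x ! j = -1 \<and> x ! j = (?H - 1 - h) + 1}"
    by (rule arg_cong[where f = card]) auto
  also have "\<dots> = card {j. j < ?t \<and> x ! Suc j - x ! j = 1 \<and> x ! j = ?H - 1 - h}"
    using card_up_steps_eq_card_down_steps[of ?t "(!) x"] closed pos_exc_steps[OF XpU_pos_exc]
    by simp
  also have "\<dots> = N (?H - 1 - h) x"
    using XpU_pos_exc by (simp add: N_def)
  finally show ?thesis .
qed

lemma vervaat_XpU_in_XmU: "vervaat x \<in> XmU"
  using neg_exc_vervaat_XpU N_vervaat_XpU[of "height x - 1"]
    N_0_pos_exc[OF XpU_pos_exc] XpU_theta_ge_2
  by (simp add: XmU_def height_vervaat_XpU)

lemma argH_vervaat_XpU: "argH (vervaat x) = theta x - argH x"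
proof -
  let ?t = "theta x" and ?m = "argH x"
  have m: "0 < ?m" "?m < ?t" using XpU_argH[OF x] by simp_all
  have "vervaat x ! k = - height x \<longleftrightarrow> k = ?t - ?m" if k: "0 < k" "k < ?t" for k
  proof -
    have "vervaat x ! k = - height x \<longleftrightarrow> x ! ((k + ?m) mod ?t) = 0"
      using nth_vervaat_XpU[of k] k by simp
    also have "\<dots> \<longleftrightarrow> (k + ?m) mod ?t = (?t - ?m + ?m) mod ?t"
      using XpU_pos_exc m by (auto simp: pos_exc_def)
    also have "\<dots> \<longleftrightarrow> k = ?t - ?m"
      using rotate_eq_iff[of ?t k "?t - ?m" ?m] k m by simp
    finally show ?thesis .
  qed
  then show ?thesis
    unfolding argH_def[of "vervaat x"] height_vervaat_XpU theta_vervaat using m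
    by (intro the_equality) auto
qed

lemma vervaat_vervaat_XpU: "vervaat (vervaat x) = x"
proof (rule nth_equalityI)
  let ?t = "theta x" and ?m = "argH x"
  have m: "0 < ?m" "?m < ?t" using XpU_argH[OF x] by simp_all
  show "length (vervaat (vervaat x)) = length x"
    using pos_exc_length[OF XpU_pos_exc] by (simp add: length_vervaat theta_vervaat)
  fix n assume "n < length (vervaat (vervaat x))"
  then have n: "n \<le> ?t" by (simp add: length_vervaat theta_vervaat)
  have "vervaat (vervaat x) ! n = vervaat x ! ((n + (?t - ?m)) mod ?t) + height x"
    using nth_vervaat[of "vervaat x" n] n m neg_exc_vervaat_XpU
    by (simp add: theta_vervaat argH_vervaat_XpU height_vervaat_XpU neg_exc_def)
  also have "\<dots> = x ! (((n + (?t - ?m)) mod ?t + ?m) mod ?t)"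
    using nth_vervaat_XpU[of "(n + (?t - ?m)) mod ?t"] m by simp
  also have "\<dots> = x ! n"
    using rotate_rotate[of ?m ?t n] n m XpU_pos_exc by (cases "n = ?t") (auto simp: pos_exc_def)
  finally show "vervaat (vervaat x) ! n = x ! n" .
qed

end

lemma theta_map_uminus [simp]: "theta (map uminus x) = theta x"
  by (simp add: theta_def)

lemma nth_map_uminus: "x \<noteq> [] \<Longrightarrow> n \<le> theta x \<Longrightarrow> map uminus x ! n = - (x ! n)"
  by (rule nth_map) (cases x; simp add: theta_def)

lemma pos_exc_map_uminus: "pos_exc (map uminus x) \<longleftrightarrow> neg_exc x"
  by (cases "x = []") (auto simp: pos_exc_def neg_exc_def unit_jumps_def nth_map_uminus)

context
  fixes x assumes neg: "neg_exc x" and long: "2 \<le> theta x"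
begin

lemma height_map_uminus: "height (map uminus x) = - height x"
  using neg neg_exc_not_pos_exc[OF neg long]
  by (simp add: height_def pos_exc_map_uminus neg_exc_def image_image)

lemma N_map_uminus: "N h (map uminus x) = N (-h) x"
proof -
  have "x \<noteq> []" using neg by (simp add: neg_exc_def)
  then have "{n. n < theta x \<and> map uminus x ! (n + 1) - map uminus x ! n = 1 \<and> map uminus x ! n = h}
      = {n. n < theta x \<and> x ! (n + 1) - x ! n = -1 \<and> x ! n = -h}"
    by (auto simp: nth_map_uminus)
  then show ?thesis
    using neg neg_exc_not_pos_exc[OF neg long] by (simp add: N_def pos_exc_map_uminus)
qed

lemma argH_map_uminus: "argH (map uminus x) = argH x"
proof -
  have "x \<noteq> []" using neg by (simp add: neg_exc_def)
  then show ?thesis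
    unfolding argH_def height_map_uminus theta_map_uminus
    by (metis (opaque_lifting) less_imp_le nth_map_uminus neg_equal_iff_equal)
qed

end

lemma XmU_theta_ge_2:
  assumes "x \<in> XmU"
  shows "2 \<le> theta x"
proof -
  have "0 < theta x"
  proof (rule ccontr)
    assume "\<not> 0 < theta x"
    then have "N h x = 0" for h by (simp add: N_def)
    then show False using assms by (simp add: XmU_def)
  qed
  then show ?thesis
    using assms pos_exc_theta_ge_2[of "map uminus x"] by (simp add: XmU_def pos_exc_map_uminus)
qed

lemma map_uminus_XmU: "x \<in> XmU \<Longrightarrow> map uminus x \<in> XpU"
  using XmU_theta_ge_2[of x]
  by (simp add: XmU_def XpU_def pos_exc_map_uminus height_map_uminus N_map_uminus add.commute)

lemma vervaat_map_uminus:
  assumes x: "x \<in> XmU"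
  shows "vervaat (map uminus x) = map uminus (vervaat x)"
proof (rule nth_equalityI)
  have neg: "neg_exc x" and long: "2 \<le> theta x" using x XmU_theta_ge_2 by (auto simp: XmU_def)
  have m: "argH x < theta x"
    using XpU_argH(2)[OF map_uminus_XmU[OF x]] argH_map_uminus[OF neg long] by simp
  show "length (vervaat (map uminus x)) = length (map uminus (vervaat x))"
    by (simp add: length_vervaat)
  fix n assume "n < length (vervaat (map uminus x))"
  then have n: "n \<le> theta x" by (simp add: length_vervaat)
  have "x \<noteq> []" "x ! theta x = x ! 0" using neg by (auto simp: neg_exc_def)
  then show "vervaat (map uminus x) ! n = map uminus (vervaat x) ! n"
    using nth_vervaat[of "map uminus x" n] nth_vervaat[OF m _ n] n m
      nth_map_uminus[of x] nth_map_uminus[of "vervaat x" n]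
    by (simp add: argH_map_uminus[OF neg long] height_map_uminus[OF neg long] theta_vervaat
        length_vervaat)
qed

context
  fixes x assumes x: "x \<in> XmU"
begin

lemma XmU_neg_exc: "neg_exc x"
  using x by (simp add: XmU_def)

lemma vervaat_XmU_reflect: "vervaat x = map uminus (vervaat (map uminus x))"
  using vervaat_map_uminus[OF x] by (simp add: comp_def)

lemma vervaat_XmU_in_XpU: "vervaat x \<in> XpU"
  using map_uminus_XmU[OF vervaat_XpU_in_XmU[OF map_uminus_XmU[OF x]]] vervaat_XmU_reflect by simp

lemma height_vervaat_XmU: "height (vervaat x) = - height x"
proof -
  let ?V = "vervaat (map uminus x)"
  have "?V \<in> XmU" by (rule vervaat_XpU_in_XmU[OF map_uminus_XmU[OF x]])
  then have "height (map uminus ?V) = - height ?V"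
    using XmU_theta_ge_2 by (intro height_map_uminus) (auto simp: XmU_def)
  also have "\<dots> = height (map uminus x)"
    using height_vervaat_XpU[OF map_uminus_XmU[OF x]] by simp
  also have "\<dots> = - height x"
    using height_map_uminus[OF XmU_neg_exc XmU_theta_ge_2[OF x]] .
  finally show ?thesis using vervaat_XmU_reflect by simp
qed

lemma N_vervaat_XmU: "N (-h) (vervaat x) = N (height x + 1 - h) x"
proof -
  let ?y = "map uminus x"
  let ?V = "vervaat ?y"
  have "?V \<in> XmU" by (rule vervaat_XpU_in_XmU[OF map_uminus_XmU[OF x]])
  then have "N (-h) (map uminus ?V) = N h ?V"
    using XmU_theta_ge_2 by (subst N_map_uminus) (auto simp: XmU_def)
  also have "\<dots> = N (height ?y - 1 + h) ?y"
    using N_vervaat_XpU[OF map_uminus_XmU[OF x], of "-h"] by simp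
  also have "\<dots> = N (height x + 1 - h) x"
    using N_map_uminus[OF XmU_neg_exc XmU_theta_ge_2[OF x]]
      height_map_uminus[OF XmU_neg_exc XmU_theta_ge_2[OF x]]
    by (simp add: algebra_simps)
  finally show ?thesis using vervaat_XmU_reflect by simp
qed

lemma vervaat_vervaat_XmU: "vervaat (vervaat x) = x"
proof -
  let ?V = "vervaat (map uminus x)"
  have "vervaat (vervaat x) = vervaat (map uminus ?V)"
    using vervaat_XmU_reflect by simp
  also have "\<dots> = map uminus (vervaat ?V)"
    by (rule vervaat_map_uminus[OF vervaat_XpU_in_XmU[OF map_uminus_XmU[OF x]]])
  also have "\<dots> = x"
    using vervaat_vervaat_XpU[OF map_uminus_XmU[OF x]] by (simp add: comp_def)
  finally show ?thesis .
qed

end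

theorem proposition4:
  shows "bij_betw vervaat XU XU
    \<and> (\<forall>x\<in>XU. theta (vervaat x) = theta x \<and> height (vervaat x) = - height x)
    \<and> vervaat ` XpU \<subseteq> XmU \<and> vervaat ` XmU \<subseteq> XpU
    \<and> (\<forall>x\<in>XpU. \<forall>h. 0 \<le> h \<and> h \<le> height x - 1 \<longrightarrow>
          N (-h) (vervaat x) = N (height x - 1 - h) x)
    \<and> (\<forall>x\<in>XmU. \<forall>h. height x + 1 \<le> h \<and> h \<le> 0 \<longrightarrow>
          N (-h) (vervaat x) = N (height x + 1 - h) x)
    \<and> (\<forall>x\<in>XU. vervaat (vervaat x) = x)
    \<and> (\<forall>x\<in>XU. inv_into XU vervaat x = vervaat x)"
proof -
  have involution: "\<forall>x\<in>XU. vervaat (vervaat x) = x"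
    using vervaat_vervaat_XpU vervaat_vervaat_XmU by (auto simp: XU_def)
  have maps_to: "vervaat ` XU \<subseteq> XU"
    using vervaat_XpU_in_XmU vervaat_XmU_in_XpU by (auto simp: XU_def)
  have bij: "bij_betw vervaat XU XU"
    by (rule bij_betw_byWitness[OF involution involution maps_to maps_to])
  have "inv_into XU vervaat x = vervaat x" if "x \<in> XU" for x
    using bij_betw_imp_inj_on[OF bij] that maps_to involution by (intro inv_into_f_eq) auto
  then show ?thesis
    using bij involution vervaat_XpU_in_XmU vervaat_XmU_in_XpU theta_vervaat
      height_vervaat_XpU height_vervaat_XmU N_vervaat_XpU N_vervaat_XmU
    by (auto simp: XU_def)
qed

end
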